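(* Let $A\in\mathbb{R}^{n\times n}$, $B\in\mathbb{R}^{n\times m}$, $C\in\mathbb{R}^{p\times n}$ with $(A,C)$ observable, $\ell$ its observability index, and $\mathbf{F}_\ell,\mathbf{L}_\ell,\mathbf{B}_\ell,\mathbf{A}_\ell$ as in the context. For each $\hat x$, $\hat\chi$ and each sequence $\{u(k)\}_{k=0}^\infty$ there exists $\hat\xi$ such that the solution $(x(\cdot),\chi(\cdot))$ of $x^+=Ax+Bu$, $y=Cx$, $\chi^+=\mathbf{F}_\ell\chi+\mathbf{L}_\ell y+\mathbf{B}_\ell u$ with $(x(0),\chi(0))=(\hat x,\hat\chi)$, its output $y(\cdot)=Cx(\cdot)$, and the solution $\xi(\cdot)$ of $\xi^+=\mathbf{A}_\ell\xi+\mathbf{B}_\ell v$ with $\xi(\ell)=\hat\xi$ and $v(k)=u(k)$ for $k\ge\ell$ satisfy $\xi(k)=(y(k-\ell),\dots,y(k-1),u(k-\ell),\dots,u(k-1))=\chi(k)$ for all $k\ge\ell$.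
   Context: $(v_1,\dots,v_r)$ denotes a stacked column vector. The observability index $\ell$ is the smallest $l$ with $\operatorname{rank}[C;CA;\dots;CA^{l-1}]=n$. $\mathcal{O}_\ell=[C;CA;\dots;CA^{\ell-1}]$; $\mathcal{T}_\ell\in\mathbb{R}^{p\ell\times m\ell}$ block lower triangular with $(i,j)$ block $CA^{i-j-1}B$ if $i>j$ and $0$ otherwise; $\mathcal{R}_\ell=[A^{\ell-1}B\ \cdots\ AB\ B]$; $\mathcal{O}_\ell^{L}$ a fixed left inverse of $\mathcal{O}_\ell$. $\mathbf{F}_\ell=\mathrm{blockdiag}(S_p,S_m)$, $S_q\in\mathbb{R}^{q\ell\times q\ell}$ with blocks $I_q$ at block positions $(i,i+1)$, $i=1,\dots,\ell-1$, zeros elsewhere; $\mathbf{L}_\ell\in\mathbb{R}^{(p\ell+m\ell)\times p}$ with $I_p$ in rows $p\ell-p+1,\dots,p\ell$, zeros elsewhere; $\mathbf{B}_\ell\in\mathbb{R}^{(p\ell+m\ell)\times m}$ with $I_m$ in its last $m$ rows, zeros elsewhere. $Z_\ell=[CA^\ell\mathcal{O}_\ell^L\ \ C\mathcal{R}_\ell-CA^\ell\mathcal{O}_\ell^L\mathcal{T}_\ell]$, $\mathbf{A}_\ell=\mathbf{F}_\ell+\mathbf{L}_\ell Z_\ell$. *)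

theory Defs
  imports "Jordan_Normal_Form.Matrix" "Jordan_Normal_Form.DL_Rank"
begin

text \<open>Matrices are Jordan_Normal_Form matrices of explicit dimensions.
 All block indices below are 0-based.\<close>

text \<open>Observability matrix O_l = [C; CA; ...; CA^(l-1)], of size (p*l) x n, p = dim_row C.\<close>
definition obs_mat :: "real mat \<Rightarrow> real mat \<Rightarrow> nat \<Rightarrow> real mat" where
  "obs_mat A C l = mat (dim_row C * l) (dim_col A)
     (\<lambda>(i,j). (C * (A ^\<^sub>m (i div dim_row C))) $$ (i mod dim_row C, j))"

definition observable :: "real mat \<Rightarrow> real mat \<Rightarrow> bool" where
  "observable A C \<longleftrightarrow> (\<exists>l. vec_space.rank (dim_row C * l) (obs_mat A C l) = dim_col A)"

definition obs_index :: "real mat \<Rightarrow> real mat \<Rightarrow> nat" where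
  "obs_index A C = (LEAST l. vec_space.rank (dim_row C * l) (obs_mat A C l) = dim_col A)"

definition toep_mat :: "real mat \<Rightarrow> real mat \<Rightarrow> real mat \<Rightarrow> nat \<Rightarrow> real mat" where
  "toep_mat A B C l = mat (dim_row C * l) (dim_col B * l)
     (\<lambda>(r,c). let i = r div dim_row C; j = c div dim_col B in
        if j < i then (C * (A ^\<^sub>m (i - j - 1)) * B) $$ (r mod dim_row C, c mod dim_col B) else 0)"

text \<open>R_l = [A^(l-1) B, ..., A B, B]: n x (m*l); block j equals A^(l-1-j) B.\<close>
definition reach_mat :: "real mat \<Rightarrow> real mat \<Rightarrow> nat \<Rightarrow> real mat" where
  "reach_mat A B l = mat (dim_row A) (dim_col B * l)
     (\<lambda>(r,c). ((A ^\<^sub>m (l - 1 - c div dim_col B)) * B) $$ (r, c mod dim_col B))"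

text \<open>S_q: (q*l) x (q*l), identity blocks I_q at block positions (i,i+1).\<close>
definition shift_mat :: "nat \<Rightarrow> nat \<Rightarrow> real mat" where
  "shift_mat q l = mat (q * l) (q * l) (\<lambda>(r,c). if c = r + q then 1 else 0)"

definition F_mat :: "nat \<Rightarrow> nat \<Rightarrow> nat \<Rightarrow> real mat" where
  "F_mat p m l = four_block_mat (shift_mat p l) (0\<^sub>m (p * l) (m * l))
                                (0\<^sub>m (m * l) (p * l)) (shift_mat m l)"

text \<open>L_l: (p*l+m*l) x p with I_p in rows p*l-p, ..., p*l-1 (0-based).\<close>
definition L_mat :: "nat \<Rightarrow> nat \<Rightarrow> nat \<Rightarrow> real mat" where
  "L_mat p m l = mat (p * l + m * l) p (\<lambda>(r,c). if r + p = p * l + c then 1 else 0)"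

text \<open>B_l: (p*l+m*l) x m with I_m in the last m rows.\<close>
definition Bl_mat :: "nat \<Rightarrow> nat \<Rightarrow> nat \<Rightarrow> real mat" where
  "Bl_mat p m l = mat (p * l + m * l) m (\<lambda>(r,c). if r + m = p * l + m * l + c then 1 else 0)"

definition Z_mat :: "real mat \<Rightarrow> real mat \<Rightarrow> real mat \<Rightarrow> real mat \<Rightarrow> nat \<Rightarrow> real mat" where
  "Z_mat A B C OL l = (let p = dim_row C; m = dim_col B;
      M1 = C * (A ^\<^sub>m l) * OL;
      M2 = C * reach_mat A B l - C * (A ^\<^sub>m l) * OL * toep_mat A B C l in
      mat p (p * l + m * l) (\<lambda>(i,j). if j < p * l then M1 $$ (i, j) else M2 $$ (i, j - p * l)))"

definition Al_mat :: "real mat \<Rightarrow> real mat \<Rightarrow> real mat \<Rightarrow> real mat \<Rightarrow> nat \<Rightarrow> real mat" where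
  "Al_mat A B C OL l = F_mat (dim_row C) (dim_col B) l
      + L_mat (dim_row C) (dim_col B) l * Z_mat A B C OL l"

fun traj :: "real mat \<Rightarrow> real vec \<Rightarrow> (nat \<Rightarrow> real vec) \<Rightarrow> nat \<Rightarrow> real vec" where
  "traj M z0 w 0 = z0"
| "traj M z0 w (Suc k) = M *\<^sub>v traj M z0 w k + w k"

text \<open>Stacked window (y(k-l),...,y(k-1),u(k-l),...,u(k-1)) of length p*l+m*l.\<close>
definition window :: "nat \<Rightarrow> nat \<Rightarrow> nat \<Rightarrow> (nat \<Rightarrow> real vec) \<Rightarrow> (nat \<Rightarrow> real vec) \<Rightarrow> nat \<Rightarrow> real vec" where
  "window p m l y u k = vec (p * l + m * l)
     (\<lambda>i. if i < p * l then y (k - l + i div p) $ (i mod p)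
          else u (k - l + (i - p * l) div m) $ ((i - p * l) mod m))"

end

theory Submission imports Defs begin

text \<open>For k \<ge> l the window w(k) = (y(k-l), ..., y(k-1), u(k-l), ..., u(k-1)) is the state of the
shift register chi(k+1) = F chi(k) + L y(k) + B_l u(k), whatever chi(0) is: F pushes the initial
content out in l steps. Along a trajectory the stacked outputs satisfy Y = O x(k-l) + T U and
x(k) = A^l x(k-l) + R U (block recursions of O, T, R in l), so the left inverse of O gives
Z w(k) = C A^l x(k-l) + C R U = y(k). Hence A_l w(k) + B_l u(k) = F w(k) + L y(k) + B_l u(k) = w(k+1),
and xi started at xi(l) = w(l) follows the window.\<close>

definition stack :: "nat \<Rightarrow> nat \<Rightarrow> (nat \<Rightarrow> 'a vec) \<Rightarrow> 'a vec" where
  "stack q l f = vec (q * l) (\<lambda>i. f (i div q) $ (i mod q))"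

lemma stack_carrier [simp]: "stack q l f \<in> carrier_vec (q * l)"
  and dim_stack [simp]: "dim_vec (stack q l f) = q * l"
  by (simp_all add: stack_def)

lemma index_stack [simp]: "i < q * l \<Longrightarrow> stack q l f $ i = f (i div q) $ (i mod q)"
  by (simp add: stack_def)

lemma stack_cong: "(\<And>j. j < l \<Longrightarrow> f j = g j) \<Longrightarrow> stack q l f = stack q l g"
  unfolding stack_def
  by (intro eq_vecI) (auto simp: less_mult_imp_div_less mult.commute)

lemma stack_Suc:
  assumes "f 0 \<in> carrier_vec q"
  shows "stack q (Suc l) f = f 0 @\<^sub>v stack q l (\<lambda>j. f (Suc j))"
proof (rule eq_vecI)
  fix i assume "i < dim_vec (f 0 @\<^sub>v stack q l (\<lambda>j. f (Suc j)))"
  then have i: "i < q + q * l" using assms by simp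
  show "stack q (Suc l) f $ i = (f 0 @\<^sub>v stack q l (\<lambda>j. f (Suc j))) $ i"
  proof (cases "i < q")
    case True
    then show ?thesis using i assms by simp
  next
    case False
    then have "0 < q" using i by (cases q) auto
    then have "i div q = Suc ((i - q) div q)" "i mod q = (i - q) mod q"
      using False by (simp_all add: le_div_geq le_mod_geq)
    then show ?thesis using i assms False by simp
  qed
qed (use assms in simp)

lemma less_mult_imp_mod_less: "i < q * l \<Longrightarrow> i mod q < (q :: nat)"
  by (cases q) auto

lemma stack_add:
  assumes "\<And>j. g j \<in> carrier_vec q"
  shows "stack q l f + stack q l g = stack q l (\<lambda>j. f j + g j)"
proof (rule eq_vecI)
  fix i assume "i < dim_vec (stack q l (\<lambda>j. f j + g j))"
  then have "i < q * l" "i mod q < q" by (simp_all add: less_mult_imp_mod_less)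
  then show "(stack q l f + stack q l g) $ i = stack q l (\<lambda>j. f j + g j) $ i"
    using assms[of "i div q"] by (simp add: carrier_vecD)
qed simp

lemma carrier_vec_stack:
  assumes "v \<in> carrier_vec (q * l)"
  obtains f where "\<And>j. f j \<in> carrier_vec q" "v = stack q l f"
proof
  show "v = stack q l (\<lambda>j. vec q (\<lambda>r. v $ (j * q + r)))"
  proof (rule eq_vecI)
    fix i assume "i < dim_vec (stack q l (\<lambda>j. vec q (\<lambda>r. v $ (j * q + r))))"
    then have "i < q * l" "i mod q < q" by (simp_all add: less_mult_imp_mod_less)
    then show "v $ i = stack q l (\<lambda>j. vec q (\<lambda>r. v $ (j * q + r))) $ i"
      by (simp add: div_mult_mod_eq)
  qed (use assms in simp)
qed simp

lemma window_stack:
  "window p m l y u k = stack p l (\<lambda>j. y (k - l + j)) @\<^sub>v stack m l (\<lambda>j. u (k - l + j))"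
  by (rule eq_vecI) (auto simp: window_def)

lemma mult_mat_vec_col_blocks:
  assumes M: "M \<in> carrier_mat r (a + b)" and M1: "M1 \<in> carrier_mat r a" and M2: "M2 \<in> carrier_mat r b"
    and left: "\<And>i j. i < r \<Longrightarrow> j < a \<Longrightarrow> M $$ (i, j) = M1 $$ (i, j)"
    and right: "\<And>i j. i < r \<Longrightarrow> j < b \<Longrightarrow> M $$ (i, a + j) = M2 $$ (i, j)"
    and v: "v \<in> carrier_vec a" and w: "w \<in> carrier_vec b"
  shows "M *\<^sub>v (v @\<^sub>v w) = M1 *\<^sub>v v + M2 *\<^sub>v w"
proof (rule eq_vecI)
  fix i assume "i < dim_vec (M1 *\<^sub>v v + M2 *\<^sub>v w)"
  then have i: "i < r" using M2 by simp
  have "row M i = row M1 i @\<^sub>v row M2 i"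
  proof (rule eq_vecI)
    fix j assume "j < dim_vec (row M1 i @\<^sub>v row M2 i)"
    then have "j < a + b" using M1 M2 by simp
    then show "row M i $ j = (row M1 i @\<^sub>v row M2 i) $ j"
      using left[OF i, of j] right[OF i, of "j - a"] M M1 M2 i by auto
  qed (use M M1 M2 in simp)
  then show "(M *\<^sub>v (v @\<^sub>v w)) $ i = (M1 *\<^sub>v v + M2 *\<^sub>v w) $ i"
    using scalar_prod_append[of "row M1 i" a "row M2 i" b v w] M M1 M2 v w i by simp
qed (use M M2 in simp)

lemma mult_mat_vec_row_blocks:
  assumes M: "M \<in> carrier_mat (a + b) c" and M1: "M1 \<in> carrier_mat a c" and M2: "M2 \<in> carrier_mat b c"
    and top: "\<And>i j. i < a \<Longrightarrow> j < c \<Longrightarrow> M $$ (i, j) = M1 $$ (i, j)"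
    and bottom: "\<And>i j. i < b \<Longrightarrow> j < c \<Longrightarrow> M $$ (a + i, j) = M2 $$ (i, j)"
    and v: "v \<in> carrier_vec c"
  shows "M *\<^sub>v v = (M1 *\<^sub>v v) @\<^sub>v (M2 *\<^sub>v v)"
proof (rule eq_vecI)
  fix i assume "i < dim_vec ((M1 *\<^sub>v v) @\<^sub>v (M2 *\<^sub>v v))"
  then have i: "i < a + b" using M1 M2 by simp
  show "(M *\<^sub>v v) $ i = ((M1 *\<^sub>v v) @\<^sub>v (M2 *\<^sub>v v)) $ i"
  proof (cases "i < a")
    case True
    then have "row M i = row M1 i" using top M M1 by (intro eq_vecI) auto
    then show ?thesis using True M M1 M2 by simp
  next
    case False
    then have "row M i = row M2 (i - a)" using bottom[of "i - a"] M M2 i by (intro eq_vecI) auto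
    then show ?thesis using False i M M1 M2 by simp
  qed
qed (use M M1 M2 in simp)

lemma Suc_div_less_iff:
  assumes "i < q * l"
  shows "Suc (i div q) < l \<longleftrightarrow> i + q < q * l"
proof -
  have "0 < q" using assms by (cases q) auto
  then have "(i + q) div q = Suc (i div q)" by simp
  moreover have "(i + q) div q < l \<longleftrightarrow> i + q < l * q"
    by (rule div_less_iff_less_mult[OF \<open>0 < q\<close>])
  ultimately show ?thesis by (simp add: mult.commute)
qed

lemma last_block_div_mod:
  assumes "i < q * l" "q * l \<le> i + q"
  shows "Suc (i div q) = l" and "i mod q = i + q - q * l"
proof -
  have "i div q < l" using assms(1) by (simp add: less_mult_imp_div_less mult.commute)
  then show l: "Suc (i div q) = l" using Suc_div_less_iff[OF assms(1)] assms(2) by linarith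
  have "q * (i div q) + i mod q = i" by (rule mult_div_mod_eq)
  moreover have "q * l = q * (i div q) + q" using l by (metis mult_Suc_right add.commute)
  ultimately show "i mod q = i + q - q * l" by linarith
qed

lemma shift_mat_mult_stack:
  assumes f: "\<And>j. f j \<in> carrier_vec q"
  shows "shift_mat q l *\<^sub>v stack q l f = stack q l (\<lambda>j. if Suc j < l then f (Suc j) else 0\<^sub>v q)"
    (is "_ = ?r")
proof (rule eq_vecI)
  fix i assume "i < dim_vec ?r"
  then have i: "i < q * l" by simp
  then have "0 < q" by (cases q) auto
  have "(shift_mat q l *\<^sub>v stack q l f) $ i = (\<Sum>c<q * l. (if c = i + q then 1 else 0) * stack q l f $ c)"
    using i by (simp add: shift_mat_def scalar_prod_def lessThan_atLeast0)
  also have "\<dots> = (\<Sum>c<q * l. if c = i + q then stack q l f $ c else 0)"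
    by (rule sum.cong) (simp_all del: index_stack)
  also have "\<dots> = (if i + q < q * l then stack q l f $ (i + q) else 0)"
    by (simp add: sum.delta del: index_stack)
  also have "\<dots> = ?r $ i"
    using i f \<open>0 < q\<close> Suc_div_less_iff[OF i] by (simp add: carrier_vecD)
  finally show "(shift_mat q l *\<^sub>v stack q l f) $ i = ?r $ i" .
qed (simp add: shift_mat_def)

lemma index_stack_last_block:
  fixes a :: "'a :: semiring_1 vec"
  assumes i: "i < q * l" and a: "a \<in> carrier_vec q"
  shows "stack q l (\<lambda>j. if Suc j = l then a else 0\<^sub>v q) $ i
    = (\<Sum>c<q. (if i + q = q * l + c then 1 else 0) * a $ c)"
proof -
  have "(\<Sum>c<q. (if i + q = q * l + c then 1 else 0) * a $ c)
      = (\<Sum>c<q. if c = i + q - q * l then (if q * l \<le> i + q then a $ c else 0) else 0)"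
    by (rule sum.cong) auto
  also have "\<dots> = (if q * l \<le> i + q then a $ (i + q - q * l) else 0)"
    using i by (auto simp: sum.delta)
  also have "\<dots> = stack q l (\<lambda>j. if Suc j = l then a else 0\<^sub>v q) $ i"
    using i a less_mult_imp_mod_less[OF i] Suc_div_less_iff[OF i] last_block_div_mod[OF i] by auto
  finally show ?thesis by (rule sym)
qed

lemma L_mat_mult_vec:
  assumes a: "a \<in> carrier_vec p"
  shows "L_mat p m l *\<^sub>v a = stack p l (\<lambda>j. if Suc j = l then a else 0\<^sub>v p) @\<^sub>v 0\<^sub>v (m * l)"
    (is "_ = ?r")
proof (rule eq_vecI)
  fix i assume "i < dim_vec ?r"
  then have i: "i < p * l + m * l" by simp
  have "(L_mat p m l *\<^sub>v a) $ i = (\<Sum>c<p. (if i + p = p * l + c then 1 else 0) * a $ c)"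
    using i a by (simp add: L_mat_def scalar_prod_def lessThan_atLeast0)
  also have "\<dots> = ?r $ i"
  proof (cases "i < p * l")
    case True
    then show ?thesis using index_stack_last_block[OF True a] by simp
  qed (use i in simp)
  finally show "(L_mat p m l *\<^sub>v a) $ i = ?r $ i" .
qed (simp add: L_mat_def)

lemma Bl_mat_mult_vec:
  assumes b: "b \<in> carrier_vec m"
  shows "Bl_mat p m l *\<^sub>v b = 0\<^sub>v (p * l) @\<^sub>v stack m l (\<lambda>j. if Suc j = l then b else 0\<^sub>v m)"
    (is "_ = ?r")
proof (rule eq_vecI)
  fix i assume "i < dim_vec ?r"
  then have i: "i < p * l + m * l" by simp
  have "(Bl_mat p m l *\<^sub>v b) $ i = (\<Sum>c<m. (if i + m = p * l + m * l + c then 1 else 0) * b $ c)"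
    using i b by (simp add: Bl_mat_def scalar_prod_def lessThan_atLeast0)
  also have "\<dots> = ?r $ i"
  proof (cases "i < p * l")
    case True
    then have "m \<le> m * l" by (cases l) auto
    then have "\<And>c. i + m \<noteq> p * l + m * l + c" using True by linarith
    then show ?thesis using True i by simp
  next
    case False
    then have "i - p * l < m * l" "\<And>c. i + m = p * l + m * l + c \<longleftrightarrow> (i - p * l) + m = m * l + c"
      using i by auto
    then show ?thesis using False i index_stack_last_block[of "i - p * l" m l b] b by simp
  qed
  finally show "(Bl_mat p m l *\<^sub>v b) $ i = ?r $ i" .
qed (simp add: Bl_mat_def)

lemma shift_register_step:
  assumes f: "\<And>j. f j \<in> carrier_vec p" and g: "\<And>j. g j \<in> carrier_vec m"
    and a: "a \<in> carrier_vec p" and b: "b \<in> carrier_vec m"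
  shows "F_mat p m l *\<^sub>v (stack p l f @\<^sub>v stack m l g) + (L_mat p m l *\<^sub>v a + Bl_mat p m l *\<^sub>v b)
    = stack p l (\<lambda>j. if Suc j < l then f (Suc j) else a) @\<^sub>v stack m l (\<lambda>j. if Suc j < l then g (Suc j) else b)"
proof -
  have F: "F_mat p m l *\<^sub>v (stack p l f @\<^sub>v stack m l g)
      = stack p l (\<lambda>j. if Suc j < l then f (Suc j) else 0\<^sub>v p)
        @\<^sub>v stack m l (\<lambda>j. if Suc j < l then g (Suc j) else 0\<^sub>v m)"
  proof -
    have S: "shift_mat q l \<in> carrier_mat (q * l) (q * l)" for q by (simp add: shift_mat_def)
    show ?thesis unfolding F_mat_def mult_mat_vec_split[OF S S stack_carrier stack_carrier]
      by (simp add: shift_mat_mult_stack f g)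
  qed
  have LB: "L_mat p m l *\<^sub>v a + Bl_mat p m l *\<^sub>v b
      = stack p l (\<lambda>j. if Suc j = l then a else 0\<^sub>v p)
        @\<^sub>v stack m l (\<lambda>j. if Suc j = l then b else 0\<^sub>v m)"
    unfolding L_mat_mult_vec[OF a] Bl_mat_mult_vec[OF b]
    by (subst append_vec_add[OF stack_carrier zero_carrier_vec zero_carrier_vec stack_carrier]) simp
  have "stack p l (\<lambda>j. if Suc j < l then f (Suc j) else 0\<^sub>v p)
      + stack p l (\<lambda>j. if Suc j = l then a else 0\<^sub>v p)
      = stack p l (\<lambda>j. if Suc j < l then f (Suc j) else a)"
    using f a by (subst stack_add) (auto intro!: stack_cong)
  moreover have "stack m l (\<lambda>j. if Suc j < l then g (Suc j) else 0\<^sub>v m)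
      + stack m l (\<lambda>j. if Suc j = l then b else 0\<^sub>v m)
      = stack m l (\<lambda>j. if Suc j < l then g (Suc j) else b)"
    using g b by (subst stack_add) (auto intro!: stack_cong)
  ultimately show ?thesis unfolding F LB
    by (subst append_vec_add[OF stack_carrier stack_carrier stack_carrier stack_carrier]) simp
qed

lemma traj_carrier:
  assumes "M \<in> carrier_mat d d" "z \<in> carrier_vec d" "\<And>k. w k \<in> carrier_vec d"
  shows "traj M z w k \<in> carrier_vec d"
  by (induction k) (use assms in auto)

lemma shift_register_traj:
  assumes f: "\<And>j. f j \<in> carrier_vec p" and g: "\<And>j. g j \<in> carrier_vec m"
    and a: "\<And>k. a k \<in> carrier_vec p" and b: "\<And>k. b k \<in> carrier_vec m"
  shows "traj (F_mat p m l) (stack p l f @\<^sub>v stack m l g) (\<lambda>k. L_mat p m l *\<^sub>v a k + Bl_mat p m l *\<^sub>v b k) k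
    = stack p l (\<lambda>j. if l \<le> k + j then a (k + j - l) else f (k + j))
      @\<^sub>v stack m l (\<lambda>j. if l \<le> k + j then b (k + j - l) else g (k + j))"
proof (induction k)
  case 0
  show ?case by (simp only: traj.simps(1), intro arg_cong2[where f = append_vec] stack_cong) auto
next
  case (Suc k)
  have "traj (F_mat p m l) (stack p l f @\<^sub>v stack m l g) (\<lambda>k. L_mat p m l *\<^sub>v a k + Bl_mat p m l *\<^sub>v b k) (Suc k)
      = stack p l (\<lambda>j. if Suc j < l then if l \<le> k + Suc j then a (k + Suc j - l) else f (k + Suc j) else a k)
        @\<^sub>v stack m l (\<lambda>j. if Suc j < l then if l \<le> k + Suc j then b (k + Suc j - l) else g (k + Suc j) else b k)"
    unfolding traj.simps Suc.IH by (rule shift_register_step) (use f g a b in auto)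
  also have "\<dots> = stack p l (\<lambda>j. if l \<le> Suc k + j then a (Suc k + j - l) else f (Suc k + j))
      @\<^sub>v stack m l (\<lambda>j. if l \<le> Suc k + j then b (Suc k + j - l) else g (Suc k + j))"
  proof -
    have "j < l \<Longrightarrow> \<not> Suc j < l \<Longrightarrow> k = Suc k + j - l" for j by simp
    then show ?thesis by (intro arg_cong2[where f = append_vec] stack_cong) auto
  qed
  finally show ?case .
qed

lemma window_eq_shift_register:
  assumes a: "\<And>k. a k \<in> carrier_vec p" and b: "\<And>k. b k \<in> carrier_vec m"
    and z: "z \<in> carrier_vec (p * l + m * l)" and k: "l \<le> k"
  shows "window p m l a b k = traj (F_mat p m l) z (\<lambda>k. L_mat p m l *\<^sub>v a k + Bl_mat p m l *\<^sub>v b k) k"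
proof -
  obtain f g where f: "\<And>j. f j \<in> carrier_vec p" and g: "\<And>j. g j \<in> carrier_vec m"
    and z_eq: "z = stack p l f @\<^sub>v stack m l g"
  proof -
    obtain f where "\<And>j. f j \<in> carrier_vec p" "vec_first z (p * l) = stack p l f"
      using carrier_vec_stack[OF vec_first_carrier] by blast
    moreover obtain g where "\<And>j. g j \<in> carrier_vec m" "vec_last z (m * l) = stack m l g"
      using carrier_vec_stack[OF vec_last_carrier] by blast
    ultimately show ?thesis using that vec_first_last_append[OF z] by metis
  qed
  have "stack p l (\<lambda>j. a (k - l + j)) = stack p l (\<lambda>j. if l \<le> k + j then a (k + j - l) else f (k + j))"
    and "stack m l (\<lambda>j. b (k - l + j)) = stack m l (\<lambda>j. if l \<le> k + j then b (k + j - l) else g (k + j))"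
    using k by (auto intro: stack_cong)
  then show ?thesis unfolding z_eq shift_register_traj[OF f g a b] window_stack by simp
qed

lemma window_Suc:
  assumes a: "\<And>k. a k \<in> carrier_vec p" and b: "\<And>k. b k \<in> carrier_vec m" and k: "l \<le> k"
  shows "window p m l a b (Suc k) = F_mat p m l *\<^sub>v window p m l a b k + (L_mat p m l *\<^sub>v a k + Bl_mat p m l *\<^sub>v b k)"
proof -
  let ?traj = "traj (F_mat p m l) (0\<^sub>v (p * l + m * l)) (\<lambda>k. L_mat p m l *\<^sub>v a k + Bl_mat p m l *\<^sub>v b k)"
  have "window p m l a b (Suc k) = ?traj (Suc k)"
    using k by (intro window_eq_shift_register[OF a b zero_carrier_vec]) simp
  also have "\<dots> = F_mat p m l *\<^sub>v ?traj k + (L_mat p m l *\<^sub>v a k + Bl_mat p m l *\<^sub>v b k)" by simp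
  also have "?traj k = window p m l a b k"
    using k by (intro window_eq_shift_register[OF a b zero_carrier_vec, symmetric])
  finally show ?thesis .
qed

lemma F_mat_carrier: "F_mat p m l \<in> carrier_mat (p * l + m * l) (p * l + m * l)"
  by (simp add: F_mat_def shift_mat_def)

lemma L_mat_carrier: "L_mat p m l \<in> carrier_mat (p * l + m * l) p"
  by (simp add: L_mat_def)

lemma Bl_mat_carrier: "Bl_mat p m l \<in> carrier_mat (p * l + m * l) m"
  by (simp add: Bl_mat_def)

context
  fixes A B C :: "real mat" and n m p :: nat
  assumes A: "A \<in> carrier_mat n n" and B: "B \<in> carrier_mat n m" and C: "C \<in> carrier_mat p n"
begin

lemma obs_mat_carrier [simp]: "obs_mat A C l \<in> carrier_mat (p * l) n"
  using A C by (simp add: obs_mat_def)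

lemma reach_mat_carrier [simp]: "reach_mat A B l \<in> carrier_mat n (m * l)"
  using A B by (simp add: reach_mat_def)

lemma toep_mat_carrier [simp]: "toep_mat A B C l \<in> carrier_mat (p * l) (m * l)"
  using B C by (simp add: toep_mat_def)

lemma obs_mat_index:
  "i < p * l \<Longrightarrow> j < n \<Longrightarrow> obs_mat A C l $$ (i, j) = (C * A ^\<^sub>m (i div p)) $$ (i mod p, j)"
  using A C by (simp add: obs_mat_def del: index_mult_mat)

lemma obs_mat_mult_index:
  assumes N: "N \<in> carrier_mat n c" and i: "i < p * l" and j: "j < c"
  shows "(obs_mat A C l * N) $$ (i, j) = (C * A ^\<^sub>m (i div p) * N) $$ (i mod p, j)"
proof -
  have r: "i mod p < p" using i by (rule less_mult_imp_mod_less)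
  have CA: "C * A ^\<^sub>m (i div p) \<in> carrier_mat p n" using A C by simp
  have O: "dim_row (obs_mat A C l) = p * l" "dim_col (obs_mat A C l) = n"
    using A C by (simp_all add: obs_mat_def)
  have "row (obs_mat A C l) i = row (C * A ^\<^sub>m (i div p)) (i mod p)"
  proof (rule eq_vecI)
    show "row (obs_mat A C l) i $ j = row (C * A ^\<^sub>m (i div p)) (i mod p) $ j"
      if "j < dim_vec (row (C * A ^\<^sub>m (i div p)) (i mod p))" for j
      using O CA i r that by (simp add: obs_mat_index del: index_mult_mat)
  qed (use A O CA in simp)
  then show ?thesis using C O N i j r by simp
qed

lemma obs_mat_Suc_mult_vec:
  assumes x: "x \<in> carrier_vec n"
  shows "obs_mat A C (Suc l) *\<^sub>v x = (C *\<^sub>v x) @\<^sub>v (obs_mat A C l *\<^sub>v (A *\<^sub>v x))"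
proof -
  have "obs_mat A C (Suc l) *\<^sub>v x = (C *\<^sub>v x) @\<^sub>v ((obs_mat A C l * A) *\<^sub>v x)"
  proof (rule mult_mat_vec_row_blocks[where a = p and b = "p * l"])
    fix i j assume i: "i < p * l" and j: "j < n"
    then have "0 < p" by (cases p) auto
    then have "(p + i) div p = Suc (i div p)" "(p + i) mod p = i mod p" by simp_all
    then have "obs_mat A C (Suc l) $$ (p + i, j) = (C * (A ^\<^sub>m (i div p) * A)) $$ (i mod p, j)"
      using i j by (simp add: obs_mat_index del: index_mult_mat)
    also have "C * (A ^\<^sub>m (i div p) * A) = C * A ^\<^sub>m (i div p) * A"
      using A C by (simp add: assoc_mult_mat[of C p n _ n A n])
    finally show "obs_mat A C (Suc l) $$ (p + i, j) = (obs_mat A C l * A) $$ (i, j)"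
      using A i j by (simp add: obs_mat_mult_index del: index_mult_mat)
  qed (use A C x in \<open>auto simp: obs_mat_def\<close>)
  then show ?thesis using assoc_mult_mat_vec[OF obs_mat_carrier A x] by simp
qed

lemma reach_mat_Suc_mult_vec:
  assumes v: "v \<in> carrier_vec m" and w: "w \<in> carrier_vec (m * l)"
  shows "reach_mat A B (Suc l) *\<^sub>v (v @\<^sub>v w) = A ^\<^sub>m l *\<^sub>v (B *\<^sub>v v) + reach_mat A B l *\<^sub>v w"
proof -
  have "reach_mat A B (Suc l) *\<^sub>v (v @\<^sub>v w) = (A ^\<^sub>m l * B) *\<^sub>v v + reach_mat A B l *\<^sub>v w"
  proof (rule mult_mat_vec_col_blocks[where a = m and b = "m * l"])
    fix i j assume i: "i < n" and j: "j < m * l"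
    then have "0 < m" by (cases m) auto
    then have "(m + j) div m = Suc (j div m)" "(m + j) mod m = j mod m" by simp_all
    then show "reach_mat A B (Suc l) $$ (i, m + j) = reach_mat A B l $$ (i, j)"
      using A B i j by (simp add: reach_mat_def)
  qed (use A B v w in \<open>auto simp: reach_mat_def\<close>)
  then show ?thesis using assoc_mult_mat_vec[OF pow_carrier_mat[OF A] B v] by simp
qed

lemma toep_mat_Suc_mult_vec:
  assumes v: "v \<in> carrier_vec m" and w: "w \<in> carrier_vec (m * l)"
  shows "toep_mat A B C (Suc l) *\<^sub>v (v @\<^sub>v w)
    = 0\<^sub>v p @\<^sub>v (obs_mat A C l *\<^sub>v (B *\<^sub>v v) + toep_mat A B C l *\<^sub>v w)"
proof -
  define M where "M = mat (p * l) (m + m * l)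
    (\<lambda>(i, c). if c < m then (obs_mat A C l * B) $$ (i, c) else toep_mat A B C l $$ (i, c - m))"
  have M: "M \<in> carrier_mat (p * l) (m + m * l)" by (simp add: M_def)
  have "toep_mat A B C (Suc l) *\<^sub>v (v @\<^sub>v w) = (0\<^sub>m p (m + m * l) *\<^sub>v (v @\<^sub>v w)) @\<^sub>v (M *\<^sub>v (v @\<^sub>v w))"
  proof (rule mult_mat_vec_row_blocks[where a = p and b = "p * l"])
    fix i c assume i: "i < p * l" and c: "c < m + m * l"
    then have "0 < p" by (cases p) auto
    then have ip: "(p + i) div p = Suc (i div p)" "(p + i) mod p = i mod p" by simp_all
    show "toep_mat A B C (Suc l) $$ (p + i, c) = M $$ (i, c)"
    proof (cases "c < m")
      case True
      then show ?thesis using A B C i c ip by (simp add: toep_mat_def M_def obs_mat_mult_index)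
    next
      case False
      then have "0 < m" using c by (cases m) auto
      then have "c div m = Suc ((c - m) div m)" "c mod m = (c - m) mod m"
        using False by (simp_all add: le_div_geq le_mod_geq)
      then show ?thesis using A B C i c ip False by (simp add: toep_mat_def M_def Let_def)
    qed
  qed (use B C v w in \<open>auto simp: toep_mat_def M_def\<close>)
  also have "M *\<^sub>v (v @\<^sub>v w) = (obs_mat A C l * B) *\<^sub>v v + toep_mat A B C l *\<^sub>v w"
    by (rule mult_mat_vec_col_blocks[OF M mult_carrier_mat[OF obs_mat_carrier B] toep_mat_carrier])
      (use v w in \<open>simp_all add: M_def\<close>)
  also have "0\<^sub>m p (m + m * l) *\<^sub>v (v @\<^sub>v w) = 0\<^sub>v p"
    using v w by (intro eq_vecI) (simp_all add: scalar_prod_def)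
  finally show ?thesis using assoc_mult_mat_vec[OF obs_mat_carrier B v] by simp
qed

context
  fixes x u :: "nat \<Rightarrow> real vec"
  assumes x_Suc: "\<And>k. x (Suc k) = A *\<^sub>v x k + B *\<^sub>v u k"
    and x: "\<And>k. x k \<in> carrier_vec n" and u: "\<And>k. u k \<in> carrier_vec m"
begin

lemma state_eq_pow_plus_reach:
  "x (k0 + l) = A ^\<^sub>m l *\<^sub>v x k0 + reach_mat A B l *\<^sub>v stack m l (\<lambda>j. u (k0 + j))"
proof (induction l arbitrary: k0)
  case 0
  have "reach_mat A B 0 *\<^sub>v stack m 0 (\<lambda>j. u (k0 + j)) = 0\<^sub>v n"
    using A by (intro eq_vecI) (simp_all add: reach_mat_def scalar_prod_def)
  then show ?case using A x[of k0] by simp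
next
  case (Suc l)
  let ?U = "stack m l (\<lambda>j. u (Suc k0 + j))"
  have Al: "A ^\<^sub>m l \<in> carrier_mat n n" using A by simp
  have RU: "reach_mat A B l *\<^sub>v ?U \<in> carrier_vec n"
    by (rule mult_mat_vec_carrier[OF reach_mat_carrier stack_carrier])
  have "x (k0 + Suc l) = A ^\<^sub>m l *\<^sub>v x (Suc k0) + reach_mat A B l *\<^sub>v ?U"
    using Suc.IH[of "Suc k0"] by simp
  also have "A ^\<^sub>m l *\<^sub>v x (Suc k0) = A ^\<^sub>m Suc l *\<^sub>v x k0 + A ^\<^sub>m l *\<^sub>v (B *\<^sub>v u k0)"
    using A B x[of k0] u[of k0]
    by (simp add: x_Suc mult_add_distrib_mat_vec[OF Al] assoc_mult_mat_vec[OF Al A])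
  also have "\<dots> + reach_mat A B l *\<^sub>v ?U
      = A ^\<^sub>m Suc l *\<^sub>v x k0 + (A ^\<^sub>m l *\<^sub>v (B *\<^sub>v u k0) + reach_mat A B l *\<^sub>v ?U)"
    by (rule assoc_add_vec[OF _ _ RU])
      (use x u in \<open>auto intro: mult_mat_vec_carrier[OF pow_carrier_mat[OF A]] mult_mat_vec_carrier[OF B]
        simp del: pow_mat.simps\<close>)
  also have "A ^\<^sub>m l *\<^sub>v (B *\<^sub>v u k0) + reach_mat A B l *\<^sub>v ?U
      = reach_mat A B (Suc l) *\<^sub>v stack m (Suc l) (\<lambda>j. u (k0 + j))"
    using u[of k0] by (simp add: stack_Suc reach_mat_Suc_mult_vec)
  finally show ?case .
qed

lemma output_stack_eq_obs_plus_toep: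
  "stack p l (\<lambda>j. C *\<^sub>v x (k0 + j))
    = obs_mat A C l *\<^sub>v x k0 + toep_mat A B C l *\<^sub>v stack m l (\<lambda>j. u (k0 + j))"
proof (induction l arbitrary: k0)
  case 0
  then show ?case using A B C by (intro eq_vecI) (simp_all add: obs_mat_def toep_mat_def)
next
  case (Suc l)
  let ?O = "obs_mat A C l" and ?T = "toep_mat A B C l"
  let ?U = "stack m l (\<lambda>j. u (Suc k0 + j))"
  have Ax: "A *\<^sub>v x k0 \<in> carrier_vec n" and Bu: "B *\<^sub>v u k0 \<in> carrier_vec n"
    using A B x u by auto
  have OAx: "?O *\<^sub>v (A *\<^sub>v x k0) \<in> carrier_vec (p * l)" and OBu: "?O *\<^sub>v (B *\<^sub>v u k0) \<in> carrier_vec (p * l)"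
    and TU: "?T *\<^sub>v ?U \<in> carrier_vec (p * l)"
    using Ax Bu by (auto intro: mult_mat_vec_carrier[OF obs_mat_carrier] mult_mat_vec_carrier[OF toep_mat_carrier])
  have "stack p (Suc l) (\<lambda>j. C *\<^sub>v x (k0 + j))
      = (C *\<^sub>v x k0) @\<^sub>v (?O *\<^sub>v x (Suc k0) + ?T *\<^sub>v ?U)"
    using C x[of k0] Suc.IH[of "Suc k0"] by (simp add: stack_Suc)
  also have "?O *\<^sub>v x (Suc k0) = ?O *\<^sub>v (A *\<^sub>v x k0) + ?O *\<^sub>v (B *\<^sub>v u k0)"
    using Ax Bu by (simp add: x_Suc mult_add_distrib_mat_vec[OF obs_mat_carrier])
  also have "\<dots> + ?T *\<^sub>v ?U = ?O *\<^sub>v (A *\<^sub>v x k0) + (?O *\<^sub>v (B *\<^sub>v u k0) + ?T *\<^sub>v ?U)"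
    by (rule assoc_add_vec[OF OAx OBu TU])
  also have "(C *\<^sub>v x k0) @\<^sub>v \<dots>
      = ((C *\<^sub>v x k0) @\<^sub>v (?O *\<^sub>v (A *\<^sub>v x k0))) + (0\<^sub>v p @\<^sub>v (?O *\<^sub>v (B *\<^sub>v u k0) + ?T *\<^sub>v ?U))"
    using C x[of k0] OAx OBu TU by (subst append_vec_add[of _ p _ _ "p * l"]) auto
  also have "\<dots> = obs_mat A C (Suc l) *\<^sub>v x k0 + toep_mat A B C (Suc l) *\<^sub>v stack m (Suc l) (\<lambda>j. u (k0 + j))"
    using x[of k0] u[of k0] by (simp add: stack_Suc obs_mat_Suc_mult_vec toep_mat_Suc_mult_vec)
  finally show ?case .
qed

lemma Z_mat_mult_window:
  assumes OL: "OL \<in> carrier_mat n (p * l)" and left_inv: "OL * obs_mat A C l = 1\<^sub>m n"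
  shows "Z_mat A B C OL l *\<^sub>v window p m l (\<lambda>k. C *\<^sub>v x k) u (k0 + l) = C *\<^sub>v x (k0 + l)"
proof -
  let ?O = "obs_mat A C l" and ?T = "toep_mat A B C l" and ?R = "reach_mat A B l"
  let ?M1 = "C * A ^\<^sub>m l * OL" and ?M2 = "C * reach_mat A B l - C * A ^\<^sub>m l * OL * toep_mat A B C l"
  let ?Y = "stack p l (\<lambda>j. C *\<^sub>v x (k0 + j))" and ?U = "stack m l (\<lambda>j. u (k0 + j))"
  have CA: "C * A ^\<^sub>m l \<in> carrier_mat p n" using A C by simp
  have M1: "?M1 \<in> carrier_mat p (p * l)" using CA OL by simp
  have M2: "?M2 \<in> carrier_mat p (m * l)"
    by (rule minus_carrier_mat[OF mult_carrier_mat[OF M1 toep_mat_carrier]])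
  have Ox: "?O *\<^sub>v x k0 \<in> carrier_vec (p * l)" and TU: "?T *\<^sub>v ?U \<in> carrier_vec (p * l)"
    and RU: "?R *\<^sub>v ?U \<in> carrier_vec n" and Alx: "A ^\<^sub>m l *\<^sub>v x k0 \<in> carrier_vec n"
    using x[of k0] by (auto intro: mult_mat_vec_carrier[OF obs_mat_carrier]
        mult_mat_vec_carrier[OF toep_mat_carrier] mult_mat_vec_carrier[OF reach_mat_carrier]
        mult_mat_vec_carrier[OF pow_carrier_mat[OF A]])
  have "Z_mat A B C OL l *\<^sub>v (?Y @\<^sub>v ?U) = ?M1 *\<^sub>v ?Y + ?M2 *\<^sub>v ?U"
    by (rule mult_mat_vec_col_blocks[OF _ M1 M2]) (use B C in \<open>simp_all add: Z_mat_def Let_def\<close>)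
  also have "?M1 *\<^sub>v ?Y = ?M1 *\<^sub>v (?O *\<^sub>v x k0) + ?M1 *\<^sub>v (?T *\<^sub>v ?U)"
    unfolding output_stack_eq_obs_plus_toep by (rule mult_add_distrib_mat_vec[OF M1 Ox TU])
  also have "?M1 *\<^sub>v (?O *\<^sub>v x k0) = C *\<^sub>v (A ^\<^sub>m l *\<^sub>v x k0)"
  proof -
    have "?M1 * ?O = C * A ^\<^sub>m l * (OL * ?O)"
      using CA OL by (simp add: assoc_mult_mat[of _ p n _ "p * l" _ n])
    then have "?M1 * ?O = C * A ^\<^sub>m l" using right_mult_one_mat[OF CA] left_inv by simp
    then show ?thesis
      using assoc_mult_mat_vec[OF M1 obs_mat_carrier x[of k0]]
        assoc_mult_mat_vec[OF C pow_carrier_mat[OF A] x[of k0]] by simp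
  qed
  also have "?M2 *\<^sub>v ?U = C *\<^sub>v (?R *\<^sub>v ?U) - ?M1 *\<^sub>v (?T *\<^sub>v ?U)"
    using C M1 by (simp add: minus_mult_distrib_mat_vec[of _ p "m * l"] assoc_mult_mat_vec[of _ p _ _ "m * l"])
  also have "C *\<^sub>v (A ^\<^sub>m l *\<^sub>v x k0) + ?M1 *\<^sub>v (?T *\<^sub>v ?U) + (C *\<^sub>v (?R *\<^sub>v ?U) - ?M1 *\<^sub>v (?T *\<^sub>v ?U))
      = C *\<^sub>v (A ^\<^sub>m l *\<^sub>v x k0 + ?R *\<^sub>v ?U)"
    using C M1 TU RU Alx by (intro eq_vecI) (simp_all add: mult_add_distrib_mat_vec[OF C])
  finally show ?thesis by (simp add: window_stack state_eq_pow_plus_reach)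
qed

lemma traj_Al_mat_window:
  assumes OL: "OL \<in> carrier_mat n (p * l)" and left_inv: "OL * obs_mat A C l = 1\<^sub>m n"
  shows "traj (Al_mat A B C OL l) (window p m l (\<lambda>k. C *\<^sub>v x k) u l) (\<lambda>j. Bl_mat p m l *\<^sub>v u (j + l)) d
    = window p m l (\<lambda>k. C *\<^sub>v x k) u (d + l)"
proof (induction d)
  case (Suc d)
  let ?y = "\<lambda>k. C *\<^sub>v x k"
  let ?w = "window p m l ?y u (d + l)"
  have Z: "Z_mat A B C OL l \<in> carrier_mat p (p * l + m * l)"
    using B C by (simp add: Z_mat_def Let_def)
  have w: "?w \<in> carrier_vec (p * l + m * l)" by (simp add: window_def)
  have "Al_mat A B C OL l *\<^sub>v ?w = F_mat p m l *\<^sub>v ?w + L_mat p m l *\<^sub>v (Z_mat A B C OL l *\<^sub>v ?w)"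
    using B C add_mult_distrib_mat_vec[OF F_mat_carrier mult_carrier_mat[OF L_mat_carrier Z] w]
      assoc_mult_mat_vec[OF L_mat_carrier Z w] by (simp add: Al_mat_def)
  also have "Z_mat A B C OL l *\<^sub>v ?w = ?y (d + l)"
    by (rule Z_mat_mult_window[OF OL left_inv])
  finally have "traj (Al_mat A B C OL l) (window p m l ?y u l) (\<lambda>j. Bl_mat p m l *\<^sub>v u (j + l)) (Suc d)
      = F_mat p m l *\<^sub>v ?w + (L_mat p m l *\<^sub>v ?y (d + l) + Bl_mat p m l *\<^sub>v u (d + l))"
    using Suc.IH u[of "d + l"] C x[of "d + l"]
    by (simp add: assoc_add_vec[OF mult_mat_vec_carrier[OF F_mat_carrier w]
        mult_mat_vec_carrier[OF L_mat_carrier] mult_mat_vec_carrier[OF Bl_mat_carrier]])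
  also have "\<dots> = window p m l ?y u (Suc d + l)"
    using C x u by (simp add: window_Suc)
  finally show ?case .
qed simp

end

end

theorem lemma7:
  fixes A B C OL :: "real mat" and n m p :: nat
    and u :: "nat \<Rightarrow> real vec" and xh chih :: "real vec"
  assumes "A \<in> carrier_mat n n" "B \<in> carrier_mat n m" "C \<in> carrier_mat p n"
    and "observable A C"
    and "OL \<in> carrier_mat n (p * obs_index A C)"
    and "OL * obs_mat A C (obs_index A C) = 1\<^sub>m n"
    and "\<And>k. u k \<in> carrier_vec m"
    and "xh \<in> carrier_vec n"
    and "chih \<in> carrier_vec (p * obs_index A C + m * obs_index A C)"
  shows "\<exists>xih \<in> carrier_vec (p * obs_index A C + m * obs_index A C).
     (let l = obs_index A C;
          x = traj A xh (\<lambda>k. B *\<^sub>v u k);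
          y = (\<lambda>k. C *\<^sub>v x k);
          chi = traj (F_mat p m l) chih (\<lambda>k. L_mat p m l *\<^sub>v y k + Bl_mat p m l *\<^sub>v u k);
          xi = (\<lambda>k. traj (Al_mat A B C OL l) xih (\<lambda>j. Bl_mat p m l *\<^sub>v u (j + l)) (k - l))
      in \<forall>k \<ge> l. xi k = window p m l y u k \<and> window p m l y u k = chi k)"
proof -
  note A = assms(1) and B = assms(2) and C = assms(3) and OL = assms(5) and left_inv = assms(6)
    and u = assms(7) and xh = assms(8) and chih = assms(9)
  define l where "l = obs_index A C"
  define x where "x = traj A xh (\<lambda>k. B *\<^sub>v u k)"
  have x: "x k \<in> carrier_vec n" for k
    unfolding x_def using A B u xh by (intro traj_carrier) auto
  have x_Suc: "x (Suc k) = A *\<^sub>v x k + B *\<^sub>v u k" for k by (simp add: x_def)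
  have y: "C *\<^sub>v x k \<in> carrier_vec p" for k using C x by simp
  show ?thesis
    unfolding Let_def l_def[symmetric] x_def[symmetric]
  proof (intro bexI[of _ "window p m l (\<lambda>k. C *\<^sub>v x k) u l"] allI impI conjI)
    fix k assume k: "l \<le> k"
    show "traj (Al_mat A B C OL l) (window p m l (\<lambda>k. C *\<^sub>v x k) u l) (\<lambda>j. Bl_mat p m l *\<^sub>v u (j + l)) (k - l)
        = window p m l (\<lambda>k. C *\<^sub>v x k) u k"
      using traj_Al_mat_window[where x = x and u = u, OF A B C x_Suc x u, of OL l "k - l"] OL left_inv k
      by (simp add: l_def)
    show "window p m l (\<lambda>k. C *\<^sub>v x k) u k
        = traj (F_mat p m l) chih (\<lambda>k. L_mat p m l *\<^sub>v (C *\<^sub>v x k) + Bl_mat p m l *\<^sub>v u k) k"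
      using chih k by (intro window_eq_shift_register[OF y u]) (simp_all add: l_def)
  qed (simp add: window_def)
qed

end
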